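(* Let $\alpha\in L^1(\mathbb{R})$ be even with $\alpha\ge0$ almost everywhere, and let $w\in C^1(\mathbb{R})$ be odd with $w(0)=0$; set $W(\eta)=\int_0^\eta w(\rho)\,d\rho$. Let $\varphi,\psi\in L^1(\mathbb{R})\cap L^\infty(\mathbb{R})$. Suppose there is some $\nu>0$ such that $$\eta\, w(\eta)\le 2(1+2\nu)W(\eta)\quad\text{for all }\eta\in\mathbb{R},$$ and $$E(0)=\frac12\|\psi\|_2^2+\frac12\int_{\mathbb{R}^2}\alpha(y-x)\,W\big(\varphi(y)-\varphi(x)\big)\,dy\,dx<0.$$ Then the solution $u$ (in $C^2([0,T],L^1(\mathbb{R})\cap L^\infty(\mathbb{R}))$ for $T$ less than the maximal existence time) of the Cauchy problem $$u_{tt}(x,t)=\int_{\mathbb{R}} \alpha(y-x)\, w\big(u(y,t)-u(x,t)\big)\,dy,\quad x\in\mathbb{R},\ t>0,\qquad u(x,0)=\varphi(x),\ u_t(x,0)=\psi(x)$$ blows up in finite time, i.e. it does not exist globally in time. *)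

theory Defs
  imports "HOL-Probability.Probability"
begin

text \<open>The space X = L^1(R) \<inter> L^\<infinity>(R), elements represented by (Borel measurable)
  representatives real \<Rightarrow> real.\<close>

definition inLIL :: "(real \<Rightarrow> real) \<Rightarrow> bool" where
  "inLIL f \<longleftrightarrow> f \<in> borel_measurable lborel \<and> integrable lborel f
     \<and> esssup lborel (\<lambda>x. ereal \<bar>f x\<bar>) < \<infinity>"

text \<open>Norm of X: \<parallel>f\<parallel>_1 + \<parallel>f\<parallel>_\<infinity> (extended-real valued, so it makes sense for any f).\<close>
definition Xnorm :: "(real \<Rightarrow> real) \<Rightarrow> ereal" where
  "Xnorm f = enn2ereal (\<integral>\<^sup>+ x. ennreal \<bar>f x\<bar> \<partial>lborel) + esssup lborel (\<lambda>x. ereal \<bar>f x\<bar>)"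

definition X_continuous :: "(real \<Rightarrow> real \<Rightarrow> real) \<Rightarrow> bool" where
  "X_continuous u \<longleftrightarrow> (\<forall>t\<ge>0. ((\<lambda>s. Xnorm (\<lambda>x. u s x - u t x)) \<longlongrightarrow> 0) (at t within {0..}))"

definition X_has_deriv :: "(real \<Rightarrow> real \<Rightarrow> real) \<Rightarrow> (real \<Rightarrow> real \<Rightarrow> real) \<Rightarrow> bool" where
  "X_has_deriv u v \<longleftrightarrow> (\<forall>t\<ge>0.
     ((\<lambda>s. Xnorm (\<lambda>x. (u s x - u t x) / (s - t) - v t x)) \<longlongrightarrow> 0) (at t within {0..}))"

text \<open>W(\<eta>) = \<integral>_0^\<eta> w (oriented interval integral).\<close>
definition Wpot :: "(real \<Rightarrow> real) \<Rightarrow> real \<Rightarrow> real" where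
  "Wpot w \<eta> = (LBINT \<rho>=0..\<eta>. w \<rho>)"

definition energy0 :: "(real \<Rightarrow> real) \<Rightarrow> (real \<Rightarrow> real) \<Rightarrow> (real \<Rightarrow> real) \<Rightarrow> (real \<Rightarrow> real) \<Rightarrow> real" where
  "energy0 \<alpha> w \<phi> \<psi> = (1/2) * (LINT x|lborel. (\<psi> x)\<^sup>2)
     + (1/2) * (LINT x|lborel. LINT y|lborel. \<alpha> (y - x) * Wpot w (\<phi> y - \<phi> x))"

text \<open>A global-in-time solution: u \<in> C^2([0,\<infinity>), L^1 \<inter> L^\<infinity>) with X-valued derivatives
  u1 = u_t, u2 = u_tt, solving the equation (as an identity in X, i.e. a.e. in x)
  for every t \<ge> 0, with the initial data (as elements of X).\<close>
definition global_solution ::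
  "(real \<Rightarrow> real) \<Rightarrow> (real \<Rightarrow> real) \<Rightarrow> (real \<Rightarrow> real) \<Rightarrow> (real \<Rightarrow> real)
    \<Rightarrow> (real \<Rightarrow> real \<Rightarrow> real) \<Rightarrow> (real \<Rightarrow> real \<Rightarrow> real) \<Rightarrow> (real \<Rightarrow> real \<Rightarrow> real) \<Rightarrow> bool" where
  "global_solution \<alpha> w \<phi> \<psi> u u1 u2 \<longleftrightarrow>
     (\<forall>t\<ge>0. inLIL (u t) \<and> inLIL (u1 t) \<and> inLIL (u2 t))
     \<and> X_has_deriv u u1 \<and> X_has_deriv u1 u2 \<and> X_continuous u2
     \<and> (\<forall>t\<ge>0. AE x in lborel. u2 t x = (LINT y|lborel. \<alpha> (y - x) * w (u t y - u t x)))
     \<and> (AE x in lborel. u 0 x = \<phi> x)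
     \<and> (AE x in lborel. u1 0 x = \<psi> x)"

end

theory Submission
  imports Defs
begin

text \<open>The energy \<open>E(t) = \<parallel>u\<^sub>t\<parallel>\<^sub>2\<^sup>2/2 + Pot(u(t))/2\<close> is conserved: symmetry of the kernel and
  oddness of \<open>w\<close> turn \<open>\<integral> u\<^sub>t u\<^sub>t\<^sub>t\<close> into \<open>-(1/2) d/dt Pot(u)\<close>. For \<open>F(t) = \<parallel>u(t)\<parallel>\<^sub>2\<^sup>2\<close> the
  equation and the growth condition give \<open>F'' \<ge> (4 + 4\<nu>)\<parallel>u\<^sub>t\<parallel>\<^sub>2\<^sup>2 - 4(1 + 2\<nu>)E(0)\<close>, while
  Cauchy-Schwarz gives \<open>F'\<^sup>2 \<le> 4 F \<parallel>u\<^sub>t\<parallel>\<^sub>2\<^sup>2\<close>. If \<open>E(0) < 0\<close>, then \<open>F'\<close> eventually becomes positive and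
  from then on \<open>F/F'\<close> decreases at rate at least \<open>\<nu>\<close>; being nonnegative, it cannot do so forever.
  All time derivatives are taken in \<open>L\<^sup>1 \<inter> L\<^sup>\<infinity>\<close>, which makes the integrals \<open>\<integral> a b\<close> of two
  solution components differentiable by a product rule.\<close>

section \<open>Real analysis\<close>

lemma abs_diff_le_of_deriv_bound:
  fixes f f' :: "real \<Rightarrow> real"
  assumes "\<And>x. lo \<le> x \<Longrightarrow> x \<le> hi \<Longrightarrow> (f has_real_derivative f' x) (at x)"
    and "\<And>x. lo \<le> x \<Longrightarrow> x \<le> hi \<Longrightarrow> \<bar>f' x\<bar> \<le> K"
    and "lo \<le> a" "a \<le> hi" "lo \<le> b" "b \<le> hi"
  shows "\<bar>f b - f a\<bar> \<le> K * \<bar>b - a\<bar>"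
proof -
  have ordered: "\<bar>f d - f c\<bar> \<le> K * \<bar>d - c\<bar>" if "lo \<le> c" "c < d" "d \<le> hi" for c d
  proof -
    have "\<exists>z. c < z \<and> z < d \<and> f d - f c = (d - c) * f' z"
      by (rule MVT2) (use assms(1) that in auto)
    then obtain z where z: "c < z" "z < d" "f d - f c = (d - c) * f' z" by blast
    have "\<bar>f' z\<bar> \<le> K" using assms(2) z that by auto
    then have "\<bar>(d - c) * f' z\<bar> \<le> \<bar>d - c\<bar> * K"
      by (simp add: abs_mult mult_left_mono)
    then show ?thesis using z by (simp add: mult.commute)
  qed
  show ?thesis
  proof (cases a b rule: linorder_cases)
    case less then show ?thesis using ordered assms by blast
  next
    case equal then show ?thesis by simp
  next
    case greater then show ?thesis using ordered[of b a] assms by (simp add: abs_minus_commute)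
  qed
qed

lemma mean_value_within:
  fixes f f' :: "real \<Rightarrow> real"
  assumes "a \<le> b" "{a..b} \<subseteq> S"
    and "\<And>x. a \<le> x \<Longrightarrow> x \<le> b \<Longrightarrow> (f has_real_derivative f' x) (at x within S)"
  obtains \<xi> where "a \<le> \<xi>" "\<xi> \<le> b" "f b - f a = f' \<xi> * (b - a)"
proof -
  have "\<exists>x\<in>{a..b}. f b - f a = (\<lambda>h. f' x * h) (b - a)"
  proof (rule mvt_very_simple[OF assms(1)])
    fix x assume "a \<le> x" "x \<le> b"
    then have "(f has_real_derivative f' x) (at x within {a..b})"
      using DERIV_subset assms(2,3) by blast
    then show "(f has_derivative (\<lambda>h. f' x * h)) (at x within {a..b})"
      by (simp add: has_field_derivative_def)
  qed
  then show ?thesis using that by auto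
qed

lemma continuous_on_abs_bounded:
  fixes g :: "real \<Rightarrow> real"
  assumes "continuous_on UNIV g"
  obtains C where "C \<ge> 0" "\<And>x. \<bar>x\<bar> \<le> R \<Longrightarrow> \<bar>g x\<bar> \<le> C"
proof -
  have "compact (g ` cball 0 R)"
    by (rule compact_continuous_image) (auto intro: continuous_on_subset[OF assms])
  then obtain C where C: "\<forall>y\<in>g ` cball 0 R. norm y \<le> C"
    using compact_imp_bounded bounded_iff by metis
  have "\<bar>g x\<bar> \<le> max C 0" if "\<bar>x\<bar> \<le> R" for x
    using C that by (force simp: dist_real_def)
  then show ?thesis using that[of "max C 0"] by auto
qed

lemma tendsto_zero_if_eventually_le_linear:
  fixes Q :: "real \<Rightarrow> real"
  assumes "A \<ge> 0" "B \<ge> 0"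
    and bound: "\<And>\<delta> \<epsilon>. 0 < \<delta> \<Longrightarrow> \<delta> \<le> 1 \<Longrightarrow> 0 < \<epsilon> \<Longrightarrow> eventually (\<lambda>s. \<bar>Q s\<bar> \<le> A * \<delta> + B * \<epsilon>) F"
  shows "(Q \<longlongrightarrow> 0) F"
  unfolding tendsto_iff
proof (intro allI impI)
  fix e :: real assume e: "e > 0"
  define \<delta> where "\<delta> = min 1 (e / (4 * (A + 1)))"
  define \<epsilon> where "\<epsilon> = e / (4 * (B + 1))"
  have "A * \<delta> \<le> A * (e / (4 * (A + 1)))" using assms(1) by (intro mult_left_mono) (auto simp: \<delta>_def)
  also have "\<dots> \<le> e / 4" using assms(1) e by (simp add: field_simps)
  finally have "A * \<delta> \<le> e / 4" .
  moreover have "B * \<epsilon> \<le> e / 4" using assms(2) e by (simp add: \<epsilon>_def field_simps)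
  ultimately have "A * \<delta> + B * \<epsilon> < e" using e by linarith
  moreover have "eventually (\<lambda>s. \<bar>Q s\<bar> \<le> A * \<delta> + B * \<epsilon>) F"
    using assms(1,2) e by (intro bound) (auto simp: \<delta>_def \<epsilon>_def)
  ultimately show "eventually (\<lambda>s. dist (Q s) 0 < e) F"
    by (auto elim: eventually_mono)
qed

lemma Wpot_0 [simp]: "Wpot w 0 = 0"
  by (simp add: Wpot_def zero_ereal_def)

lemma Wpot_has_real_derivative:
  assumes "continuous_on UNIV w"
  shows "(Wpot w has_real_derivative w x) (at x)"
proof -
  have "((\<lambda>u. LBINT y=ereal 0..ereal u. w y) has_vector_derivative (w x))
      (at x within {-\<bar>x\<bar>-1..\<bar>x\<bar>+1})"
    by (rule interval_integral_FTC2) (auto intro: continuous_on_subset[OF assms])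
  moreover have "at x within {-\<bar>x\<bar>-1..\<bar>x\<bar>+1} = at x"
    by (rule at_within_Icc_at) auto
  ultimately show ?thesis
    unfolding Wpot_def has_real_derivative_iff_has_vector_derivative by (simp add: zero_ereal_def)
qed

lemma discriminant_le_of_quadratic_nonneg:
  fixes A B C :: real
  assumes "\<And>l. 0 \<le> C - 2*l*A + l^2*B" "B \<ge> 0"
  shows "A^2 \<le> B * C"
proof (cases "B > 0")
  case True
  have "0 \<le> C - 2*(A/B)*A + (A/B)^2*B" by (rule assms(1))
  then show ?thesis using True by (simp add: power2_eq_square field_simps)
next
  case False
  then have B: "B = 0" using assms(2) by simp
  show ?thesis
  proof (rule ccontr)
    assume "\<not> ?thesis"
    then have "A \<noteq> 0" using B by auto
    moreover have "0 \<le> C - 2*((C+1)/(2*A))*A + ((C+1)/(2*A))^2*B" by (rule assms(1))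
    ultimately show False using B by (simp add: field_simps)
  qed
qed

lemma eventually_pos_of_deriv_ge:
  fixes G H :: "real \<Rightarrow> real"
  assumes "\<And>t. t \<ge> 0 \<Longrightarrow> (G has_real_derivative H t) (at t within {0..})"
    and "\<And>t. t \<ge> 0 \<Longrightarrow> H t \<ge> c" and "c > 0"
  obtains t0 where "t0 \<ge> 0" "\<And>t. t \<ge> t0 \<Longrightarrow> G t > 0"
proof -
  have increase: "G b - G a \<ge> c * (b - a)" if ab: "0 \<le> a" "a \<le> b" for a b
  proof -
    obtain \<xi> where \<xi>: "a \<le> \<xi>" "\<xi> \<le> b" "G b - G a = H \<xi> * (b - a)"
      using mean_value_within[OF ab(2), of "{0..}" G H] ab assms(1) by auto
    have "c * (b - a) \<le> H \<xi> * (b - a)" using assms(2)[of \<xi>] \<xi> ab by (intro mult_right_mono) auto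
    then show ?thesis using \<xi> by simp
  qed
  define t0 where "t0 = \<bar>G 0\<bar> / c + 1"
  have t0: "t0 \<ge> 0" using assms(3) by (simp add: t0_def)
  have "c * t0 = \<bar>G 0\<bar> + c" using assms(3) by (simp add: t0_def field_simps)
  moreover have "G t0 - G 0 \<ge> c * t0" using increase[of 0 t0] t0 by simp
  ultimately have "G t0 > 0" using assms(3) by linarith
  moreover have "G t - G t0 \<ge> 0" if "t \<ge> t0" for t
    using increase[of t0 t] that t0 assms(3) by (smt (verit) mult_nonneg_nonneg)
  ultimately show ?thesis using that[OF t0] by force
qed

text \<open>Levine's concavity argument: \<open>m = F / G\<close> would eventually have to decrease at rate \<open>2\<nu>\<close>
  while staying nonnegative.\<close>

lemma concavity_blowup:
  fixes F G H N :: "real \<Rightarrow> real"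
  assumes dF: "\<And>t. t \<ge> 0 \<Longrightarrow> (F has_real_derivative 2 * G t) (at t within {0..})"
    and dG: "\<And>t. t \<ge> 0 \<Longrightarrow> (G has_real_derivative H t) (at t within {0..})"
    and F_nonneg: "\<And>t. t \<ge> 0 \<Longrightarrow> F t \<ge> 0" and N_nonneg: "\<And>t. t \<ge> 0 \<Longrightarrow> N t \<ge> 0"
    and CS: "\<And>t. t \<ge> 0 \<Longrightarrow> (G t)^2 \<le> F t * N t"
    and H_ge: "\<And>t. t \<ge> 0 \<Longrightarrow> H t \<ge> (2 + 2*\<nu>) * N t + c"
    and c: "c > 0" and \<nu>: "\<nu> > 0"
  shows False
proof -
  have "H t \<ge> c" if "t \<ge> 0" for t
    using H_ge[OF that] N_nonneg[OF that] \<nu> by (smt (verit) mult_nonneg_nonneg)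
  then obtain t0 where t0: "t0 \<ge> 0" and G_pos: "\<And>t. t \<ge> t0 \<Longrightarrow> G t > 0"
    using eventually_pos_of_deriv_ge[OF dG _ c] by blast
  define m where "m = (\<lambda>t. F t / G t)"
  define m' where "m' = (\<lambda>t. (2 * G t * G t - F t * H t) / (G t * G t))"
  have dm: "(m has_real_derivative m' t) (at t within {0..})" if "t \<ge> t0" for t
    unfolding m_def m'_def
    by (rule DERIV_divide[OF dF dG]) (use that t0 G_pos[OF that] in auto)
  have m'_le: "m' t \<le> - 2 * \<nu>" if "t \<ge> t0" for t
  proof -
    have t: "t \<ge> 0" using that t0 by simp
    have "F t * H t \<ge> F t * ((2 + 2*\<nu>) * N t + c)" by (rule mult_left_mono[OF H_ge[OF t] F_nonneg[OF t]])
    moreover have "F t * c \<ge> 0" using F_nonneg[OF t] c by simp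
    moreover have "(2 + 2*\<nu>) * (F t * N t) \<ge> (2 + 2*\<nu>) * (G t)^2"
      using CS[OF t] \<nu> by (intro mult_left_mono) auto
    ultimately have "F t * H t \<ge> (2 + 2*\<nu>) * (G t * G t)"
      by (simp add: algebra_simps power2_eq_square)
    then have "2 * G t * G t - F t * H t \<le> - 2 * \<nu> * (G t * G t)" by (simp add: algebra_simps)
    then show ?thesis using G_pos[OF that] by (simp add: m'_def divide_le_eq)
  qed
  have m_nonneg: "m t \<ge> 0" if "t \<ge> t0" for t
    using F_nonneg[of t] G_pos[OF that] that t0 by (simp add: m_def)
  define T where "T = t0 + m t0 / \<nu> + 1"
  have T: "T \<ge> t0" using m_nonneg[of t0] \<nu> by (simp add: T_def)
  obtain \<xi> where \<xi>: "t0 \<le> \<xi>" "\<xi> \<le> T" "m T - m t0 = m' \<xi> * (T - t0)"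
    using mean_value_within[OF T, of "{0..}" m m'] t0 dm by auto
  have "m' \<xi> * (T - t0) \<le> (- 2 * \<nu>) * (T - t0)" using m'_le[OF \<xi>(1)] T by (intro mult_right_mono) auto
  also have "\<dots> = - 2 * m t0 - 2 * \<nu>" using \<nu> by (simp add: T_def field_simps)
  finally show False using \<xi> m_nonneg[of t0] m_nonneg[OF T] \<nu> by simp
qed


section \<open>The space \<open>L\<^sup>1 \<inter> L\<^sup>\<infinity>\<close>\<close>

lemma esssup_abs_nonneg:
  fixes f :: "real \<Rightarrow> real"
  shows "0 \<le> esssup lborel (\<lambda>x. ereal \<bar>f x\<bar>)"
proof -
  have "esssup lborel (\<lambda>x::real. (0::ereal)) \<le> esssup lborel (\<lambda>x. ereal \<bar>f x\<bar>)"
    using esssup_mono[of "\<lambda>x. 0::ereal" lborel "\<lambda>x. ereal \<bar>f x\<bar>"] by simp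
  moreover have "esssup lborel (\<lambda>x::real. (0::ereal)) = 0"
    by (rule esssup_const) simp
  ultimately show ?thesis by simp
qed

lemma inLIL_integrable: "inLIL f \<Longrightarrow> integrable lborel f"
  by (simp add: inLIL_def)

lemma inLIL_borel: "inLIL f \<Longrightarrow> f \<in> borel_measurable borel"
  by (simp add: inLIL_def)

lemma inLIL_AE_bound:
  assumes "inLIL f"
  obtains M where "M \<ge> 0" "AE x in lborel. \<bar>f x\<bar> \<le> M"
proof -
  let ?e = "esssup lborel (\<lambda>x. ereal \<bar>f x\<bar>)"
  have "?e < \<infinity>" using assms by (simp add: inLIL_def)
  then obtain m where m: "?e = ereal m" using esssup_abs_nonneg[of f] by (cases ?e) auto
  have "AE x in lborel. ereal \<bar>f x\<bar> \<le> ?e" by (rule esssup_AE)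
  then have "AE x in lborel. \<bar>f x\<bar> \<le> m" by (simp add: m)
  moreover have "m \<ge> 0" using esssup_abs_nonneg[of f] m by simp
  ultimately show ?thesis using that by blast
qed

lemma integrable_mult_inLIL:
  assumes f: "integrable lborel f" and g: "inLIL g"
  shows "integrable lborel (\<lambda>x. f x * g x)"
proof -
  obtain M where M: "M \<ge> 0" "AE x in lborel. \<bar>g x\<bar> \<le> M" using inLIL_AE_bound[OF g] .
  have [measurable]: "f \<in> borel_measurable borel" "g \<in> borel_measurable borel"
    using borel_measurable_integrable[OF f] inLIL_borel[OF g] by simp_all
  show ?thesis
  proof (rule Bochner_Integration.integrable_bound)
    show "integrable lborel (\<lambda>x. M * f x)" using f by simp
    show "AE x in lborel. norm (f x * g x) \<le> norm (M * f x)"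
      using M(2)
    proof eventually_elim
      case (elim x)
      have "\<bar>f x\<bar> * \<bar>g x\<bar> \<le> \<bar>f x\<bar> * M" using elim by (intro mult_left_mono) auto
      then show ?case using M(1) by (simp add: abs_mult mult.commute)
    qed
  qed simp
qed

lemma inLIL_Cauchy_Schwarz:
  assumes f: "inLIL f" and g: "inLIL g"
  shows "(LINT x|lborel. f x * g x)^2 \<le> (LINT x|lborel. f x * f x) * (LINT x|lborel. g x * g x)"
proof -
  let ?A = "LINT x|lborel. f x * g x"
  let ?B = "LINT x|lborel. g x * g x"
  let ?C = "LINT x|lborel. f x * f x"
  have "?A^2 \<le> ?B * ?C"
  proof (rule discriminant_le_of_quadratic_nonneg)
    fix l :: real
    have "0 \<le> (LINT x|lborel. (f x - l * g x)^2)" by (rule integral_nonneg_AE) simp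
    also have "\<dots> = (LINT x|lborel. f x * f x - 2 * l * (f x * g x) + l^2 * (g x * g x))"
      by (rule Bochner_Integration.integral_cong[OF refl]) (simp add: power2_eq_square algebra_simps)
    also have "\<dots> = ?C - 2*l*?A + l^2*?B"
      using integrable_mult_inLIL[OF inLIL_integrable[OF f] g]
        integrable_mult_inLIL[OF inLIL_integrable[OF g] g]
        integrable_mult_inLIL[OF inLIL_integrable[OF f] f] by simp
    finally show "0 \<le> ?C - 2*l*?A + l^2*?B" .
    show "0 \<le> ?B" by (rule integral_nonneg_AE) simp
  qed
  then show ?thesis by (simp add: mult.commute)
qed

text \<open>Real-valued substitutes for convergence to \<open>0\<close> and for boundedness in the extended-real
  norm \<open>Xnorm\<close>.\<close>

definition X_vanishing :: "real filter \<Rightarrow> (real \<Rightarrow> real \<Rightarrow> real) \<Rightarrow> bool" where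
  "X_vanishing F h \<longleftrightarrow> (\<forall>e>0. eventually (\<lambda>s. integrable lborel (h s)
      \<and> (LINT x|lborel. \<bar>h s x\<bar>) \<le> e \<and> (AE x in lborel. \<bar>h s x\<bar> \<le> e)) F)"

definition X_bounded :: "real filter \<Rightarrow> (real \<Rightarrow> real \<Rightarrow> real) \<Rightarrow> real \<Rightarrow> bool" where
  "X_bounded F h M \<longleftrightarrow> eventually (\<lambda>s. integrable lborel (h s)
      \<and> (LINT x|lborel. \<bar>h s x\<bar>) \<le> M \<and> (AE x in lborel. \<bar>h s x\<bar> \<le> M)) F"

lemma X_vanishing_if_Xnorm_tendsto:
  assumes lim: "((\<lambda>s. Xnorm (h s)) \<longlongrightarrow> 0) F"
    and int: "eventually (\<lambda>s. integrable lborel (h s)) F"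
  shows "X_vanishing F h"
  unfolding X_vanishing_def
proof (intro allI impI)
  fix e :: real assume "e > 0"
  then have "eventually (\<lambda>s. Xnorm (h s) < ereal e) F"
    using order_tendstoD(2)[OF lim, of "ereal e"] by simp
  then show "eventually (\<lambda>s. integrable lborel (h s) \<and> (LINT x|lborel. \<bar>h s x\<bar>) \<le> e
      \<and> (AE x in lborel. \<bar>h s x\<bar> \<le> e)) F"
    using int
  proof eventually_elim
    case (elim s)
    let ?N = "\<integral>\<^sup>+x. ennreal \<bar>h s x\<bar> \<partial>lborel"
    let ?E = "esssup lborel (\<lambda>x. ereal \<bar>h s x\<bar>)"
    have sum: "enn2ereal ?N + ?E < ereal e" using elim by (simp add: Xnorm_def)
    have "enn2ereal ?N \<le> enn2ereal ?N + ?E" by (rule add_increasing2[OF esssup_abs_nonneg]) simp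
    then have N_less: "enn2ereal ?N < ereal e" using sum by order
    have "?E \<le> enn2ereal ?N + ?E" by (rule add_increasing) simp_all
    then have E_less: "?E < ereal e" using sum by order
    have "AE x in lborel. ereal \<bar>h s x\<bar> \<le> ?E" by (rule esssup_AE)
    then have "AE x in lborel. ereal \<bar>h s x\<bar> < ereal e"
      by eventually_elim (rule le_less_trans[OF _ E_less])
    then have "AE x in lborel. \<bar>h s x\<bar> \<le> e"
      by eventually_elim simp
    moreover have "?N = ennreal (LINT x|lborel. \<bar>h s x\<bar>)"
      by (rule nn_integral_eq_integral) (use elim in auto)
    ultimately show ?case using N_less elim by simp
  qed
qed

lemma eventually_at_within_nonneg: "eventually (\<lambda>s. s \<ge> 0 \<and> s \<noteq> t) (at t within {0..})"
  by (simp add: eventually_at_filter)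

lemma X_has_deriv_remainder_vanishing:
  assumes "\<And>t. t \<ge> 0 \<Longrightarrow> inLIL (a t)" "\<And>t. t \<ge> 0 \<Longrightarrow> inLIL (a1 t)"
    and "X_has_deriv a a1" and t: "t \<ge> 0"
  shows "X_vanishing (at t within {0..}) (\<lambda>s x. (a s x - a t x) / (s - t) - a1 t x)"
proof (rule X_vanishing_if_Xnorm_tendsto)
  show "((\<lambda>s. Xnorm (\<lambda>x. (a s x - a t x) / (s - t) - a1 t x)) \<longlongrightarrow> 0) (at t within {0..})"
    using assms(3) t unfolding X_has_deriv_def by blast
  show "eventually (\<lambda>s. integrable lborel (\<lambda>x. (a s x - a t x) / (s - t) - a1 t x)) (at t within {0..})"
    using eventually_at_within_nonneg[of t]
    by eventually_elim (use assms(1,2) t in \<open>simp add: inLIL_integrable\<close>)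
qed

lemma X_bounded_if_X_vanishing_diff:
  assumes vanish: "X_vanishing F (\<lambda>s x. k s x - g x)" and g: "integrable lborel g"
    and G: "AE x in lborel. \<bar>g x\<bar> \<le> G"
  shows "X_bounded F k (1 + max (LINT x|lborel. \<bar>g x\<bar>) G)"
proof -
  have "eventually (\<lambda>s. integrable lborel (\<lambda>x. k s x - g x) \<and> (LINT x|lborel. \<bar>k s x - g x\<bar>) \<le> 1
      \<and> (AE x in lborel. \<bar>k s x - g x\<bar> \<le> 1)) F"
    using vanish unfolding X_vanishing_def by auto
  then show ?thesis unfolding X_bounded_def
  proof eventually_elim
    case (elim s)
    have "integrable lborel (\<lambda>x. (k s x - g x) + g x)"
      by (rule Bochner_Integration.integrable_add) (use elim g in auto)
    then have int_k: "integrable lborel (k s)" by simp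
    have "(LINT x|lborel. \<bar>k s x\<bar>) \<le> (LINT x|lborel. \<bar>k s x - g x\<bar> + \<bar>g x\<bar>)"
      by (rule integral_mono) (use elim g int_k in auto)
    also have "\<dots> = (LINT x|lborel. \<bar>k s x - g x\<bar>) + (LINT x|lborel. \<bar>g x\<bar>)"
      by (rule Bochner_Integration.integral_add) (use elim g in auto)
    also have "\<dots> \<le> 1 + max (LINT x|lborel. \<bar>g x\<bar>) G" using elim by auto
    finally have "(LINT x|lborel. \<bar>k s x\<bar>) \<le> 1 + max (LINT x|lborel. \<bar>g x\<bar>) G" .
    moreover have "AE x in lborel. \<bar>k s x - g x\<bar> \<le> 1" using elim by simp
    then have "AE x in lborel. \<bar>k s x\<bar> \<le> 1 + max (LINT x|lborel. \<bar>g x\<bar>) G"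
      using G by eventually_elim auto
    ultimately show ?case using int_k by simp
  qed
qed

lemma X_bounded_const:
  assumes "inLIL g"
  obtains M where "X_bounded F (\<lambda>s. g) M"
proof -
  obtain G where "AE x in lborel. \<bar>g x\<bar> \<le> G" using inLIL_AE_bound[OF assms] by blast
  then have "AE x in lborel. \<bar>g x\<bar> \<le> max (LINT x|lborel. \<bar>g x\<bar>) G"
    by eventually_elim auto
  then show ?thesis
    using that[of "max (LINT x|lborel. \<bar>g x\<bar>) G"] inLIL_integrable[OF assms]
    unfolding X_bounded_def by simp
qed

lemma integral_mult_tendsto_zero:
  assumes vanish: "X_vanishing F h" and bounded: "X_bounded F k M"
  shows "((\<lambda>s. LINT x|lborel. h s x * k s x) \<longlongrightarrow> 0) F"
  unfolding tendsto_iff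
proof (intro allI impI)
  fix e :: real assume e: "e > 0"
  define e' where "e' = e / (2 * (\<bar>M\<bar> + 1))"
  have e': "e' > 0" using e by (simp add: e'_def add_pos_nonneg)
  have "eventually (\<lambda>s. integrable lborel (h s) \<and> (LINT x|lborel. \<bar>h s x\<bar>) \<le> e'
      \<and> (AE x in lborel. \<bar>h s x\<bar> \<le> e')) F"
    using vanish e' unfolding X_vanishing_def by auto
  then show "eventually (\<lambda>s. dist (LINT x|lborel. h s x * k s x) 0 < e) F"
    using bounded unfolding X_bounded_def
  proof eventually_elim
    case (elim s)
    have "\<bar>LINT x|lborel. h s x * k s x\<bar> \<le> (LINT x|lborel. \<bar>h s x * k s x\<bar>)"
      by (rule integral_abs_bound)
    also have "\<dots> \<le> (LINT x|lborel. \<bar>M\<bar> * \<bar>h s x\<bar>)"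
    proof (rule integral_mono_AE')
      show "integrable lborel (\<lambda>x. \<bar>M\<bar> * \<bar>h s x\<bar>)" using elim by auto
      have "AE x in lborel. \<bar>k s x\<bar> \<le> M" using elim by simp
      then show "AE x in lborel. \<bar>h s x * k s x\<bar> \<le> \<bar>M\<bar> * \<bar>h s x\<bar>"
      proof eventually_elim
        case (elim x)
        then have "\<bar>h s x\<bar> * \<bar>k s x\<bar> \<le> \<bar>h s x\<bar> * \<bar>M\<bar>" by (intro mult_left_mono) auto
        then show ?case by (simp add: abs_mult mult.commute)
      qed
    qed simp
    also have "\<dots> = \<bar>M\<bar> * (LINT x|lborel. \<bar>h s x\<bar>)" by simp
    also have "\<dots> \<le> (\<bar>M\<bar> + 1) * e'" using elim e' by (intro mult_mono) auto
    also have "\<dots> = e / 2" using e by (simp add: e'_def field_simps)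
    finally show ?case using e by simp
  qed
qed

lemma X_has_deriv_quotient_bounded:
  assumes "\<And>t. t \<ge> 0 \<Longrightarrow> inLIL (a t)" "\<And>t. t \<ge> 0 \<Longrightarrow> inLIL (a1 t)"
    and "X_has_deriv a a1" and t: "t \<ge> 0"
  obtains M where "M > 0" "X_bounded (at t within {0..}) (\<lambda>s x. (a s x - a t x) / (s - t)) M"
proof -
  obtain G where G: "AE x in lborel. \<bar>a1 t x\<bar> \<le> G" using inLIL_AE_bound[OF assms(2)[OF t]] by blast
  have "X_bounded (at t within {0..}) (\<lambda>s x. (a s x - a t x) / (s - t))
      (1 + max (LINT x|lborel. \<bar>a1 t x\<bar>) G)"
    by (rule X_bounded_if_X_vanishing_diff[OF X_has_deriv_remainder_vanishing[OF assms]
          inLIL_integrable[OF assms(2)[OF t]] G])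
  moreover have "0 \<le> (LINT x|lborel. \<bar>a1 t x\<bar>)" by (rule integral_nonneg_AE) simp
  ultimately show ?thesis using that by (smt (verit))
qed

lemma X_has_deriv_imp_X_vanishing_diff:
  assumes "\<And>t. t \<ge> 0 \<Longrightarrow> inLIL (a t)" "\<And>t. t \<ge> 0 \<Longrightarrow> inLIL (a1 t)"
    and "X_has_deriv a a1" and t: "t \<ge> 0"
  shows "X_vanishing (at t within {0..}) (\<lambda>s x. a s x - a t x)"
  unfolding X_vanishing_def
proof (intro allI impI)
  fix e :: real assume e: "e > 0"
  obtain M where M: "M > 0" "X_bounded (at t within {0..}) (\<lambda>s x. (a s x - a t x) / (s - t)) M"
    using X_has_deriv_quotient_bounded[OF assms] by blast
  have "((\<lambda>s. \<bar>s - t\<bar>) \<longlongrightarrow> \<bar>t - t\<bar>) (at t within {0..})"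
    by (intro tendsto_intros)
  then have "eventually (\<lambda>s. \<bar>s - t\<bar> < e / M) (at t within {0..})"
    using order_tendstoD(2)[of _ 0 _ "e / M"] e M by simp
  then show "eventually (\<lambda>s. integrable lborel (\<lambda>x. a s x - a t x) \<and> (LINT x|lborel. \<bar>a s x - a t x\<bar>) \<le> e
      \<and> (AE x in lborel. \<bar>a s x - a t x\<bar> \<le> e)) (at t within {0..})"
    using M(2) eventually_at_within_nonneg[of t] unfolding X_bounded_def
  proof eventually_elim
    case (elim s)
    have scale: "\<And>x. \<bar>a s x - a t x\<bar> = \<bar>s - t\<bar> * \<bar>(a s x - a t x) / (s - t)\<bar>"
      using elim by simp
    have int: "integrable lborel (\<lambda>x. a s x - a t x)"
      using assms(1) elim t by (simp add: inLIL_integrable)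
    have small: "\<bar>s - t\<bar> * M \<le> e" using elim M by (simp add: pos_less_divide_eq less_imp_le)
    have "(LINT x|lborel. \<bar>a s x - a t x\<bar>) = \<bar>s - t\<bar> * (LINT x|lborel. \<bar>(a s x - a t x) / (s - t)\<bar>)"
      by (simp only: scale integral_mult_right_zero)
    also have "\<dots> \<le> \<bar>s - t\<bar> * M" using elim by (intro mult_left_mono) auto
    finally have "(LINT x|lborel. \<bar>a s x - a t x\<bar>) \<le> e" using small by simp
    moreover have "AE x in lborel. \<bar>(a s x - a t x) / (s - t)\<bar> \<le> M" using elim by simp
    then have "AE x in lborel. \<bar>a s x - a t x\<bar> \<le> e"
    proof eventually_elim
      case (elim x)
      then have "\<bar>s - t\<bar> * \<bar>(a s x - a t x) / (s - t)\<bar> \<le> \<bar>s - t\<bar> * M"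
        by (intro mult_left_mono) auto
      then show ?case using scale[of x] small by linarith
    qed
    ultimately show ?case using int by simp
  qed
qed


lemma integrable_inLIL_mult:
  "integrable lborel f \<Longrightarrow> inLIL g \<Longrightarrow> integrable lborel (\<lambda>x. g x * f x)"
  using integrable_mult_inLIL[of f g] by (simp add: mult.commute)

lemma integral_mult_quotient_decomposition:
  fixes a a0 a1 b b0 b1 :: "real \<Rightarrow> real"
  assumes "inLIL a" "inLIL a0" "inLIL a1" "inLIL b" "inLIL b0" "inLIL b1" and d: "d \<noteq> 0"
  shows "(LINT x|lborel. ((a x - a0 x) / d - a1 x) * b x) + (LINT x|lborel. a1 x * (b x - b0 x))
      + (LINT x|lborel. a0 x * ((b x - b0 x) / d - b1 x))
    = ((LINT x|lborel. a x * b x) - (LINT x|lborel. a0 x * b0 x)) / d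
      - (LINT x|lborel. a1 x * b0 x + a0 x * b1 x)"
proof -
  note I = assms(1-6)[THEN inLIL_integrable]
  have "(LINT x|lborel. ((a x - a0 x) / d - a1 x) * b x) + (LINT x|lborel. a1 x * (b x - b0 x))
      + (LINT x|lborel. a0 x * ((b x - b0 x) / d - b1 x))
    = (LINT x|lborel. ((a x - a0 x) / d - a1 x) * b x + a1 x * (b x - b0 x)
      + a0 x * ((b x - b0 x) / d - b1 x))"
    using I integrable_mult_inLIL[of _ b] integrable_inLIL_mult[of _ a1] integrable_inLIL_mult[of _ a0]
      assms(3,4,2) by simp
  also have "\<dots> = (LINT x|lborel. (a x * b x - a0 x * b0 x) / d - (a1 x * b0 x + a0 x * b1 x))"
    by (rule Bochner_Integration.integral_cong) (use d in \<open>auto simp: field_simps\<close>)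
  also have "\<dots> = ((LINT x|lborel. a x * b x) - (LINT x|lborel. a0 x * b0 x)) / d
      - (LINT x|lborel. a1 x * b0 x + a0 x * b1 x)"
    using integrable_mult_inLIL[OF I(1) assms(4)] integrable_mult_inLIL[OF I(2) assms(5)]
      integrable_mult_inLIL[OF I(3) assms(5)] integrable_mult_inLIL[OF I(2) assms(6)] by simp
  finally show ?thesis .
qed

lemma X_has_deriv_integral_mult:
  assumes a: "\<And>t. t \<ge> 0 \<Longrightarrow> inLIL (a t)" "\<And>t. t \<ge> 0 \<Longrightarrow> inLIL (a1 t)" "X_has_deriv a a1"
    and b: "\<And>t. t \<ge> 0 \<Longrightarrow> inLIL (b t)" "\<And>t. t \<ge> 0 \<Longrightarrow> inLIL (b1 t)" "X_has_deriv b b1"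
    and t: "t \<ge> 0"
  shows "((\<lambda>s. LINT x|lborel. a s x * b s x) has_real_derivative
          (LINT x|lborel. a1 t x * b t x + a t x * b1 t x)) (at t within {0..})"
proof -
  let ?F = "at t within {0..}"
  let ?A = "\<lambda>s. LINT x|lborel. a s x * b s x"
  let ?D = "LINT x|lborel. a1 t x * b t x + a t x * b1 t x"
  let ?T1 = "\<lambda>s. LINT x|lborel. ((a s x - a t x) / (s - t) - a1 t x) * b s x"
  let ?T2 = "\<lambda>s. LINT x|lborel. (b s x - b t x) * a1 t x"
  let ?T3 = "\<lambda>s. LINT x|lborel. ((b s x - b t x) / (s - t) - b1 t x) * a t x"
  have b_vanish: "X_vanishing ?F (\<lambda>s x. b s x - b t x)"
    by (rule X_has_deriv_imp_X_vanishing_diff[OF b t])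
  obtain Gb where "AE x in lborel. \<bar>b t x\<bar> \<le> Gb" using inLIL_AE_bound[OF b(1)[OF t]] by blast
  then obtain Mb where b_bounded: "X_bounded ?F b Mb"
    using X_bounded_if_X_vanishing_diff[OF b_vanish inLIL_integrable[OF b(1)[OF t]]] by blast
  obtain M1 where M1: "X_bounded ?F (\<lambda>s. a1 t) M1" using X_bounded_const[OF a(2)[OF t]] by blast
  obtain M2 where M2: "X_bounded ?F (\<lambda>s. a t) M2" using X_bounded_const[OF a(1)[OF t]] by blast
  have "(?T1 \<longlongrightarrow> 0) ?F"
    by (rule integral_mult_tendsto_zero[OF X_has_deriv_remainder_vanishing[OF a t] b_bounded])
  moreover have "(?T2 \<longlongrightarrow> 0) ?F" by (rule integral_mult_tendsto_zero[OF b_vanish M1])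
  moreover have "(?T3 \<longlongrightarrow> 0) ?F"
    by (rule integral_mult_tendsto_zero[OF X_has_deriv_remainder_vanishing[OF b t] M2])
  ultimately have "((\<lambda>s. ?T1 s + ?T2 s + ?T3 s) \<longlongrightarrow> 0) ?F"
    using tendsto_add[OF tendsto_add] by fastforce
  moreover have "eventually (\<lambda>s. ?T1 s + ?T2 s + ?T3 s = (?A s - ?A t) / (s - t) - ?D) ?F"
    using eventually_at_within_nonneg[of t]
  proof eventually_elim
    case (elim s)
    then show ?case
      using integral_mult_quotient_decomposition[of "a s" "a t" "a1 t" "b s" "b t" "b1 t" "s - t"] a b t
      by (simp add: mult.commute)
  qed
  ultimately have "((\<lambda>s. (?A s - ?A t) / (s - t) - ?D) \<longlongrightarrow> 0) ?F"
    by (rule Lim_transform_eventually)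
  then have "((\<lambda>s. ((?A s - ?A t) / (s - t) - ?D) + ?D) \<longlongrightarrow> 0 + ?D) ?F"
    by (intro tendsto_intros)
  then show ?thesis by (simp add: has_field_derivative_iff)
qed


section \<open>Symmetric convolution kernels\<close>

abbreviation lborel2 :: "(real \<times> real) measure" where
  "lborel2 \<equiv> (lborel::real measure) \<Otimes>\<^sub>M (lborel::real measure)"

lemma lborel_integral_translate:
  fixes f :: "real \<Rightarrow> real"
  shows "(LINT y|lborel. f (y - x)) = (LINT z|lborel. f z)"
  using lborel_integral_real_affine[of 1 f "-x"] by simp

lemma lborel_integrable_translate:
  fixes f :: "real \<Rightarrow> real"
  shows "integrable lborel f \<Longrightarrow> integrable lborel (\<lambda>y. f (y - x))"
  using lborel_integrable_real_affine[of f 1 "-x"] by simp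

lemma AE_lborel_translate:
  fixes P :: "real \<Rightarrow> bool"
  assumes "Measurable.pred borel P" "AE z in lborel. P z"
  shows "AE y in lborel. P (y - x)"
  using AE_borel_affine[of 1 P "-x"] assms by simp

lemma AE_lborel2_fst_snd:
  assumes "AE x in lborel. P x"
  shows "AE p in lborel2. P (fst p) \<and> P (snd p)"
proof -
  obtain N where N: "N \<in> null_sets lborel" "{x \<in> space lborel. \<not> P x} \<subseteq> N"
    using assms unfolding eventually_ae_filter by auto
  have "N \<times> UNIV \<in> null_sets lborel2" "UNIV \<times> N \<in> null_sets lborel2"
    using N(1) by auto
  then have "N \<times> UNIV \<union> UNIV \<times> N \<in> null_sets lborel2" by blast
  then show ?thesis
    by (rule AE_I') (use N(2) in \<open>auto simp: space_pair_measure\<close>)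
qed

lemma lborel2_integral_swap:
  fixes f :: "real \<times> real \<Rightarrow> real"
  assumes "f \<in> borel_measurable lborel2"
  shows "integral\<^sup>L lborel2 f = integral\<^sup>L lborel2 (\<lambda>p. f (snd p, fst p))"
proof -
  have "(\<lambda>(x, y). f (y, x)) = (\<lambda>p. f (snd p, fst p))" by auto
  then show ?thesis using lborel_pair.integral_product_swap[OF assms] by simp
qed

lemma borel_measurable_LINT_snd:
  fixes f :: "real \<Rightarrow> real \<Rightarrow> real"
  assumes "(\<lambda>p. f (fst p) (snd p)) \<in> borel_measurable lborel2"
  shows "(\<lambda>x. LINT y|lborel. f x y) \<in> borel_measurable lborel"
  by (rule lborel.borel_measurable_lebesgue_integral) (use assms in \<open>simp add: case_prod_beta'\<close>)

locale sym_kernel =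
  fixes \<beta> :: "real \<Rightarrow> real"
  assumes kernel_even: "\<And>z. \<beta> (- z) = \<beta> z"
    and kernel_nonneg: "\<And>z. \<beta> z \<ge> 0"
    and kernel_integrable: "integrable lborel \<beta>"
    and kernel_borel [measurable]: "\<beta> \<in> borel_measurable borel"
begin

definition kernel_mass :: real where "kernel_mass = (LINT z|lborel. \<beta> z)"

lemma kernel_mass_nonneg: "kernel_mass \<ge> 0"
  unfolding kernel_mass_def by (rule integral_nonneg_AE) (simp add: kernel_nonneg)

lemma kernel_swap: "\<beta> (x - y) = \<beta> (y - x)"
  using kernel_even[of "y - x"] by simp

lemma integrable_kernel_fst:
  assumes h: "integrable lborel h"
  shows "integrable lborel2 (\<lambda>p. \<beta> (snd p - fst p) * h (fst p))"
proof (rule lborel_pair.Fubini_integrable)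
  have [measurable]: "h \<in> borel_measurable borel" using borel_measurable_integrable[OF h] by simp
  show "(\<lambda>p. \<beta> (snd p - fst p) * h (fst p)) \<in> borel_measurable lborel2" by measurable
  have "(LINT y|lborel. norm (\<beta> (snd (x, y) - fst (x, y)) * h (fst (x, y)))) = \<bar>h x\<bar> * kernel_mass"
    for x
    by (simp add: abs_mult kernel_nonneg lborel_integral_translate kernel_mass_def mult.commute)
  then show "integrable lborel (\<lambda>x. LINT y|lborel. norm (\<beta> (snd (x, y) - fst (x, y)) * h (fst (x, y))))"
    using h by simp
  show "AE x in lborel. integrable lborel (\<lambda>y. \<beta> (snd (x, y) - fst (x, y)) * h (fst (x, y)))"
    using lborel_integrable_translate[OF kernel_integrable] by simp
qed

lemma integral_kernel_fst:
  assumes h: "integrable lborel h"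
  shows "integral\<^sup>L lborel2 (\<lambda>p. \<beta> (snd p - fst p) * h (fst p)) = kernel_mass * (LINT x|lborel. h x)"
proof -
  have "integral\<^sup>L lborel2 (\<lambda>p. \<beta> (snd p - fst p) * h (fst p))
      = (LINT x|lborel. LINT y|lborel. \<beta> (y - x) * h x)"
    using lborel_pair.integral_fst'[OF integrable_kernel_fst[OF h]] by simp
  also have "\<dots> = (LINT x|lborel. kernel_mass * h x)"
    by (simp add: lborel_integral_translate kernel_mass_def)
  finally show ?thesis by simp
qed

lemma integrable_kernel_snd:
  assumes h: "integrable lborel h"
  shows "integrable lborel2 (\<lambda>p. \<beta> (snd p - fst p) * h (snd p))"
proof -
  have "(\<lambda>(x, y). \<beta> (x - y) * h x) = (\<lambda>p. \<beta> (snd p - fst p) * h (fst p))"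
    by (auto simp: kernel_swap)
  then show ?thesis
    using lborel_pair.integrable_product_swap_iff[of "\<lambda>p. \<beta> (snd p - fst p) * h (snd p)"]
      integrable_kernel_fst[OF h] by (simp add: case_prod_beta')
qed

lemma integral_kernel_snd:
  assumes h: "integrable lborel h"
  shows "integral\<^sup>L lborel2 (\<lambda>p. \<beta> (snd p - fst p) * h (snd p)) = kernel_mass * (LINT x|lborel. h x)"
proof -
  have [measurable]: "h \<in> borel_measurable borel" using borel_measurable_integrable[OF h] by simp
  have "integral\<^sup>L lborel2 (\<lambda>p. \<beta> (snd p - fst p) * h (snd p))
      = integral\<^sup>L lborel2 (\<lambda>p. \<beta> (snd p - fst p) * h (fst p))"
    by (subst lborel2_integral_swap) (auto simp: kernel_swap)
  then show ?thesis using integral_kernel_fst[OF h] by simp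
qed

lemma kernel_dominated:
  assumes [measurable]: "F \<in> borel_measurable lborel2" and g: "integrable lborel g"
    and bound: "AE p in lborel2. \<bar>F p\<bar> \<le> \<beta> (snd p - fst p) * (g (snd p) + g (fst p))"
  shows "integrable lborel2 F" "\<bar>integral\<^sup>L lborel2 F\<bar> \<le> 2 * kernel_mass * (LINT x|lborel. g x)"
proof -
  let ?B = "\<lambda>p. \<beta> (snd p - fst p) * g (snd p) + \<beta> (snd p - fst p) * g (fst p)"
  have int_B: "integrable lborel2 ?B"
    using integrable_kernel_snd[OF g] integrable_kernel_fst[OF g] by simp
  have le_B: "AE p in lborel2. \<bar>F p\<bar> \<le> ?B p"
    using bound by eventually_elim (simp add: distrib_left)
  show "integrable lborel2 F"
    by (rule Bochner_Integration.integrable_bound[OF int_B]) (use le_B in auto)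
  have "\<bar>integral\<^sup>L lborel2 F\<bar> \<le> integral\<^sup>L lborel2 (\<lambda>p. \<bar>F p\<bar>)" by (rule integral_abs_bound)
  also have "\<dots> \<le> integral\<^sup>L lborel2 ?B"
    by (rule integral_mono_AE'[OF int_B le_B]) (use le_B in auto)
  also have "\<dots> = 2 * kernel_mass * (LINT x|lborel. g x)"
    using integral_kernel_snd[OF g] integral_kernel_fst[OF g]
      integrable_kernel_snd[OF g] integrable_kernel_fst[OF g] by simp
  finally show "\<bar>integral\<^sup>L lborel2 F\<bar> \<le> 2 * kernel_mass * (LINT x|lborel. g x)" .
qed

end


section \<open>The interaction potential\<close>

text \<open>The pointwise form of \<open>Pot_quotient_estimate\<close>: \<open>a\<close> and \<open>b\<close> are the increments
  \<open>f\<^sub>0 y - f\<^sub>0 x\<close> and \<open>f y - f x\<close>, and \<open>d qy\<close>, \<open>d qx\<close> are the values of \<open>f - f\<^sub>0\<close> at \<open>y\<close> and \<open>x\<close>.\<close>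

lemma taylor_quotient_estimate:
  fixes Wa Wb wa a b d qy qx vy vx K Cw \<delta> :: real
  assumes T: "\<bar>Wb - Wa - wa * (b - a)\<bar> \<le> K * (b - a)^2" and wa: "\<bar>wa\<bar> \<le> Cw"
    and ba: "b - a = d * qy - d * qx" and dy: "\<bar>d * qy\<bar> \<le> \<delta>" and dx: "\<bar>d * qx\<bar> \<le> \<delta>"
    and d: "d \<noteq> 0" and K: "K \<ge> 0"
  shows "\<bar>(Wb - Wa) / d - wa * (vy - vx)\<bar> \<le>
     (2*K*\<delta>*\<bar>qy\<bar> + Cw*\<bar>qy - vy\<bar>) + (2*K*\<delta>*\<bar>qx\<bar> + Cw*\<bar>qx - vx\<bar>)"
proof -
  have b: "b - a = d*(qy-qx)" using ba by (simp add: algebra_simps)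
  have h1: "(Wb - Wa - wa * (b - a)) / d = (Wb - Wa) / d - wa * (qy - qx)"
    using d unfolding b by (simp add: diff_divide_distrib)
  have split: "(Wb - Wa) / d - wa * (vy - vx) = (Wb - Wa - wa * (b - a)) / d + wa * ((qy - vy) - (qx - vx))"
    unfolding h1 by (simp add: algebra_simps)
  have bd: "\<bar>b - a\<bar> = \<bar>d\<bar> * \<bar>qy - qx\<bar>" unfolding b by (simp add: abs_mult)
  have sq: "(b - a)^2 = \<bar>d\<bar> * (\<bar>b - a\<bar> * \<bar>qy - qx\<bar>)"
  proof -
    have "(b - a)^2 = \<bar>b - a\<bar> * \<bar>b - a\<bar>" by (simp add: power2_eq_square)
    also have "\<dots> = \<bar>d\<bar> * (\<bar>b - a\<bar> * \<bar>qy - qx\<bar>)" by (subst (2) bd) (simp add: ac_simps)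
    finally show ?thesis .
  qed
  have "\<bar>(Wb - Wa - wa * (b - a)) / d\<bar> = \<bar>Wb - Wa - wa * (b - a)\<bar> / \<bar>d\<bar>"
    by simp
  also have "\<dots> \<le> K * (b - a)^2 / \<bar>d\<bar>"
    using T by (intro divide_right_mono) auto
  also have "K * (b - a)^2 / \<bar>d\<bar> = K * (\<bar>b - a\<bar> * \<bar>qy - qx\<bar>)"
    unfolding sq using d by simp
  also have "\<dots> \<le> K * ((\<delta> + \<delta>) * (\<bar>qy\<bar> + \<bar>qx\<bar>))"
  proof (intro mult_left_mono mult_mono K)
    show "\<bar>b - a\<bar> \<le> \<delta> + \<delta>" unfolding ba using dy dx by linarith
    show "\<bar>qy - qx\<bar> \<le> \<bar>qy\<bar> + \<bar>qx\<bar>" by linarith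
  qed (use dy in auto)
  finally have A: "\<bar>(Wb - Wa - wa * (b - a)) / d\<bar> \<le> 2*K*\<delta>*\<bar>qy\<bar> + 2*K*\<delta>*\<bar>qx\<bar>"
    by (simp add: algebra_simps)
  have "\<bar>wa * ((qy - vy) - (qx - vx))\<bar> \<le> Cw * (\<bar>qy - vy\<bar> + \<bar>qx - vx\<bar>)"
    unfolding abs_mult by (intro mult_mono) (use wa in auto)
  then show ?thesis using A abs_triangle_ineq[of "(Wb - Wa - wa*(b-a))/d" "wa*((qy-vy)-(qx-vx))"]
    unfolding split by (simp add: algebra_simps)
qed


locale potential = sym_kernel \<beta> for \<beta> :: "real \<Rightarrow> real" +
  fixes w w' :: "real \<Rightarrow> real"
  assumes w_has_deriv: "\<And>x. (w has_real_derivative w' x) (at x)"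
    and w'_continuous: "continuous_on UNIV w'"
    and w_odd: "\<And>x. w (- x) = - w x"
begin

lemma w_continuous: "continuous_on UNIV w"
  using w_has_deriv by (intro continuous_at_imp_continuous_on) (auto intro: DERIV_isCont)

lemma w_borel [measurable]: "w \<in> borel_measurable borel"
  by (rule borel_measurable_continuous_onI[OF w_continuous])

lemma Wpot_has_deriv: "(Wpot w has_real_derivative w x) (at x)"
  by (rule Wpot_has_real_derivative[OF w_continuous])

lemma Wpot_borel [measurable]: "Wpot w \<in> borel_measurable borel"
  using Wpot_has_deriv
  by (intro borel_measurable_continuous_onI continuous_at_imp_continuous_on) (auto intro: DERIV_isCont)

lemma w_bounded:
  obtains C where "C \<ge> 0" "\<And>x. \<bar>x\<bar> \<le> R \<Longrightarrow> \<bar>w x\<bar> \<le> C"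
  using continuous_on_abs_bounded[OF w_continuous] by blast

lemma Wpot_abs_le_linear:
  obtains C where "C \<ge> 0" "\<And>x. \<bar>x\<bar> \<le> R \<Longrightarrow> \<bar>Wpot w x\<bar> \<le> C * \<bar>x\<bar>"
proof -
  obtain C where C: "C \<ge> 0" "\<And>x. \<bar>x\<bar> \<le> R \<Longrightarrow> \<bar>w x\<bar> \<le> C"
    using w_bounded[where R=R] by blast
  have "\<bar>Wpot w x - Wpot w 0\<bar> \<le> C * \<bar>x - 0\<bar>" if "\<bar>x\<bar> \<le> R" for x
    by (rule abs_diff_le_of_deriv_bound[where lo="-R" and hi=R and f'=w])
      (use Wpot_has_deriv C that in auto)
  then show ?thesis using that C by simp
qed

lemma Wpot_taylor:
  obtains K where "K \<ge> 0"
    "\<And>a b. \<bar>a\<bar> \<le> R \<Longrightarrow> \<bar>b\<bar> \<le> R \<Longrightarrow> \<bar>Wpot w b - Wpot w a - w a * (b - a)\<bar> \<le> K * (b - a)^2"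
proof -
  obtain K where K: "K \<ge> 0" "\<And>x. \<bar>x\<bar> \<le> R \<Longrightarrow> \<bar>w' x\<bar> \<le> K"
    using continuous_on_abs_bounded[OF w'_continuous] by blast
  have w_lipschitz: "\<bar>w c - w a\<bar> \<le> K * \<bar>c - a\<bar>" if "\<bar>a\<bar> \<le> R" "\<bar>c\<bar> \<le> R" for a c
    by (rule abs_diff_le_of_deriv_bound[where lo="-R" and hi=R and f'=w']) (use w_has_deriv K that in auto)
  have "\<bar>Wpot w b - Wpot w a - w a * (b - a)\<bar> \<le> K * (b - a)^2" if ab: "\<bar>a\<bar> \<le> R" "\<bar>b\<bar> \<le> R" for a b
  proof -
    let ?g = "\<lambda>x. Wpot w x - w a * x"
    have "\<bar>?g b - ?g a\<bar> \<le> (K * \<bar>b - a\<bar>) * \<bar>b - a\<bar>"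
    proof (rule abs_diff_le_of_deriv_bound[where lo="min a b" and hi="max a b" and f'="\<lambda>x. w x - w a"])
      fix x assume x: "min a b \<le> x" "x \<le> max a b"
      show "(?g has_real_derivative w x - w a) (at x)"
        by (auto intro!: derivative_eq_intros Wpot_has_deriv)
      have "\<bar>w x - w a\<bar> \<le> K * \<bar>x - a\<bar>" using w_lipschitz x ab by auto
      also have "\<dots> \<le> K * \<bar>b - a\<bar>" using x K by (intro mult_left_mono) auto
      finally show "\<bar>w x - w a\<bar> \<le> K * \<bar>b - a\<bar>" .
    qed auto
    then show ?thesis by (simp add: power2_eq_square algebra_simps)
  qed
  then show ?thesis using that K by blast
qed

text \<open>\<open>Pot f\<close> is twice the potential part of the energy; \<open>pot_deriv_density f v\<close> is the
  integrand of its derivative in the direction \<open>v\<close>.\<close>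

definition Pot :: "(real \<Rightarrow> real) \<Rightarrow> real" where
  "Pot f = (LINT x|lborel. LINT y|lborel. \<beta> (y - x) * Wpot w (f y - f x))"

definition pot_density :: "(real \<Rightarrow> real) \<Rightarrow> real \<times> real \<Rightarrow> real" where
  "pot_density f p = \<beta> (snd p - fst p) * Wpot w (f (snd p) - f (fst p))"

definition pot_deriv_density :: "(real \<Rightarrow> real) \<Rightarrow> (real \<Rightarrow> real) \<Rightarrow> real \<times> real \<Rightarrow> real" where
  "pot_deriv_density f v p = \<beta> (snd p - fst p) * w (f (snd p) - f (fst p)) * (v (snd p) - v (fst p))"

lemma integrable_pot_density:
  assumes f: "inLIL f"
  shows "integrable lborel2 (pot_density f)"
proof -
  have [measurable]: "f \<in> borel_measurable borel" using inLIL_borel[OF f] .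
  obtain M where M: "M \<ge> 0" "AE x in lborel. \<bar>f x\<bar> \<le> M" using inLIL_AE_bound[OF f] .
  obtain C where C: "C \<ge> 0" "\<And>x. \<bar>x\<bar> \<le> 2 * M \<Longrightarrow> \<bar>Wpot w x\<bar> \<le> C * \<bar>x\<bar>"
    using Wpot_abs_le_linear[where R="2 * M"] by blast
  show ?thesis
  proof (rule kernel_dominated(1))
    show "pot_density f \<in> borel_measurable lborel2" unfolding pot_density_def by measurable
    show "integrable lborel (\<lambda>x. C * \<bar>f x\<bar>)" using inLIL_integrable[OF f] by simp
    show "AE p in lborel2. \<bar>pot_density f p\<bar> \<le> \<beta> (snd p - fst p) * (C * \<bar>f (snd p)\<bar> + C * \<bar>f (fst p)\<bar>)"
      using AE_lborel2_fst_snd[OF M(2)]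
    proof eventually_elim
      case (elim p)
      have "\<bar>Wpot w (f (snd p) - f (fst p))\<bar> \<le> C * \<bar>f (snd p) - f (fst p)\<bar>"
        using elim by (intro C(2)) auto
      also have "\<dots> \<le> C * \<bar>f (snd p)\<bar> + C * \<bar>f (fst p)\<bar>"
        using C(1) by (simp add: distrib_left[symmetric] mult_left_mono abs_triangle_ineq4)
      finally show ?case
        unfolding pot_density_def abs_mult by (simp add: kernel_nonneg mult_left_mono)
    qed
  qed
qed

lemma Pot_eq_integral_pot_density:
  assumes "inLIL f"
  shows "Pot f = integral\<^sup>L lborel2 (pot_density f)"
  unfolding Pot_def using lborel_pair.integral_fst'[OF integrable_pot_density[OF assms]]
  by (simp add: pot_density_def)

lemma integrable_pot_deriv_density:
  assumes f: "inLIL f" and v: "integrable lborel v"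
  shows "integrable lborel2 (pot_deriv_density f v)"
proof -
  have [measurable]: "f \<in> borel_measurable borel" "v \<in> borel_measurable borel"
    using inLIL_borel[OF f] borel_measurable_integrable[OF v] by simp_all
  obtain M where M: "M \<ge> 0" "AE x in lborel. \<bar>f x\<bar> \<le> M" using inLIL_AE_bound[OF f] .
  obtain C where C: "C \<ge> 0" "\<And>x. \<bar>x\<bar> \<le> 2 * M \<Longrightarrow> \<bar>w x\<bar> \<le> C"
    using w_bounded[where R="2 * M"] by blast
  show ?thesis
  proof (rule kernel_dominated(1))
    show "pot_deriv_density f v \<in> borel_measurable lborel2" unfolding pot_deriv_density_def by measurable
    show "integrable lborel (\<lambda>x. C * \<bar>v x\<bar>)" using v by simp
    show "AE p in lborel2. \<bar>pot_deriv_density f v p\<bar> \<le> \<beta> (snd p - fst p) * (C * \<bar>v (snd p)\<bar> + C * \<bar>v (fst p)\<bar>)"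
      using AE_lborel2_fst_snd[OF M(2)]
    proof eventually_elim
      case (elim p)
      have "\<bar>w (f (snd p) - f (fst p))\<bar> \<le> C" using elim by (intro C(2)) auto
      then have "\<bar>w (f (snd p) - f (fst p))\<bar> * \<bar>v (snd p) - v (fst p)\<bar> \<le> C * (\<bar>v (snd p)\<bar> + \<bar>v (fst p)\<bar>)"
        by (intro mult_mono) (auto simp: C(1))
      then have "\<beta> (snd p - fst p) * (\<bar>w (f (snd p) - f (fst p))\<bar> * \<bar>v (snd p) - v (fst p)\<bar>)
          \<le> \<beta> (snd p - fst p) * (C * (\<bar>v (snd p)\<bar> + \<bar>v (fst p)\<bar>))"
        by (rule mult_left_mono[OF _ kernel_nonneg])
      then show ?case
        unfolding pot_deriv_density_def abs_mult by (simp add: kernel_nonneg distrib_left)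
    qed
  qed
qed

lemma Pot_quotient_estimate:
  assumes f0: "inLIL f0" and f: "inLIL f" and v: "integrable lborel v" and d: "d \<noteq> 0"
    and f0_le: "AE x in lborel. \<bar>f0 x\<bar> \<le> M" and close: "AE x in lborel. \<bar>f x - f0 x\<bar> \<le> \<delta>"
    and R: "0 \<le> \<delta>" "2 * M + 2 * \<delta> \<le> R"
    and taylor: "\<And>a b. \<bar>a\<bar> \<le> R \<Longrightarrow> \<bar>b\<bar> \<le> R \<Longrightarrow>
      \<bar>Wpot w b - Wpot w a - w a * (b - a)\<bar> \<le> K * (b - a)^2"
    and K: "K \<ge> 0" and w_le: "\<And>x. \<bar>x\<bar> \<le> R \<Longrightarrow> \<bar>w x\<bar> \<le> Cw"
  shows "\<bar>(Pot f - Pot f0) / d - integral\<^sup>L lborel2 (pot_deriv_density f0 v)\<bar>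
    \<le> 2 * kernel_mass * (2*K*\<delta>*(LINT x|lborel. \<bar>(f x - f0 x) / d\<bar>)
      + Cw * (LINT x|lborel. \<bar>(f x - f0 x) / d - v x\<bar>))"
proof -
  have [measurable]: "f0 \<in> borel_measurable borel" "f \<in> borel_measurable borel"
    "v \<in> borel_measurable borel"
    using inLIL_borel[OF f0] inLIL_borel[OF f] borel_measurable_integrable[OF v] by simp_all
  define q where "q = (\<lambda>x. (f x - f0 x) / d)"
  have dq: "\<And>z. d * q z = f z - f0 z" using d by (simp add: q_def)
  have int_q: "integrable lborel q" using f f0 by (simp add: q_def inLIL_integrable)
  define g where "g = (\<lambda>z. 2*K*\<delta>*\<bar>q z\<bar> + Cw*\<bar>q z - v z\<bar>)"
  have int_g: "integrable lborel g" unfolding g_def using int_q v by simp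
  have "integral\<^sup>L lborel g = 2*K*\<delta>*(LINT x|lborel. \<bar>q x\<bar>) + Cw*(LINT x|lborel. \<bar>q x - v x\<bar>)"
    unfolding g_def using int_q v by simp
  moreover
  let ?E = "\<lambda>p. (pot_density f p - pot_density f0 p) / d - pot_deriv_density f0 v p"
  have "(Pot f - Pot f0) / d - integral\<^sup>L lborel2 (pot_deriv_density f0 v) = integral\<^sup>L lborel2 ?E"
    using integrable_pot_density[OF f] integrable_pot_density[OF f0]
      integrable_pot_deriv_density[OF f0 v]
    by (simp add: Pot_eq_integral_pot_density[OF f] Pot_eq_integral_pot_density[OF f0])
  moreover have "\<bar>integral\<^sup>L lborel2 ?E\<bar> \<le> 2 * kernel_mass * (LINT x|lborel. g x)"
  proof (rule kernel_dominated(2)[OF _ int_g])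
    show "?E \<in> borel_measurable lborel2" unfolding pot_density_def pot_deriv_density_def by measurable
    show "AE p in lborel2. \<bar>?E p\<bar> \<le> \<beta> (snd p - fst p) * (g (snd p) + g (fst p))"
      using AE_lborel2_fst_snd[OF f0_le] AE_lborel2_fst_snd[OF close]
    proof eventually_elim
      case (elim p)
      define a where "a = f0 (snd p) - f0 (fst p)"
      define b where "b = f (snd p) - f (fst p)"
      have "\<bar>a\<bar> \<le> R" "\<bar>b\<bar> \<le> R" using elim R by (auto simp: a_def b_def)
      then have "\<bar>(Wpot w b - Wpot w a) / d - w a * (v (snd p) - v (fst p))\<bar> \<le> g (snd p) + g (fst p)"
        unfolding g_def
        by (intro taylor_quotient_estimate[OF taylor w_le]) (use elim d K in \<open>auto simp: dq a_def b_def\<close>)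
      moreover have "?E p = \<beta> (snd p - fst p) * ((Wpot w b - Wpot w a) / d - w a * (v (snd p) - v (fst p)))"
        unfolding pot_density_def pot_deriv_density_def a_def b_def by (simp add: field_simps)
      ultimately show ?case by (simp add: abs_mult kernel_nonneg mult_left_mono)
    qed
  qed
  ultimately show ?thesis by (simp add: q_def)
qed


lemma Pot_has_derivative:
  assumes u: "\<And>t. t \<ge> 0 \<Longrightarrow> inLIL (u t)" "\<And>t. t \<ge> 0 \<Longrightarrow> inLIL (u1 t)" "X_has_deriv u u1"
    and t: "t \<ge> 0"
  shows "((\<lambda>s. Pot (u s)) has_real_derivative integral\<^sup>L lborel2 (pot_deriv_density (u t) (u1 t)))
    (at t within {0..})"
proof -
  let ?F = "at t within {0..}"
  let ?D = "integral\<^sup>L lborel2 (pot_deriv_density (u t) (u1 t))"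
  obtain M where M: "M \<ge> 0" "AE x in lborel. \<bar>u t x\<bar> \<le> M" using inLIL_AE_bound[OF u(1)[OF t]] .
  define R where "R = 2 * M + 2"
  obtain K where K: "K \<ge> 0" "\<And>a b. \<bar>a\<bar> \<le> R \<Longrightarrow> \<bar>b\<bar> \<le> R \<Longrightarrow>
      \<bar>Wpot w b - Wpot w a - w a * (b - a)\<bar> \<le> K * (b - a)^2"
    using Wpot_taylor[where R=R] by blast
  obtain Cw where Cw: "Cw \<ge> 0" "\<And>x. \<bar>x\<bar> \<le> R \<Longrightarrow> \<bar>w x\<bar> \<le> Cw" using w_bounded[where R=R] by blast
  obtain Mq where Mq: "Mq > 0" "X_bounded ?F (\<lambda>s x. (u s x - u t x) / (s - t)) Mq"
    using X_has_deriv_quotient_bounded[OF u t] by blast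
  have diff: "X_vanishing ?F (\<lambda>s x. u s x - u t x)"
    by (rule X_has_deriv_imp_X_vanishing_diff[OF u t])
  have remainder: "X_vanishing ?F (\<lambda>s x. (u s x - u t x) / (s - t) - u1 t x)"
    by (rule X_has_deriv_remainder_vanishing[OF u t])
  have "((\<lambda>s. (Pot (u s) - Pot (u t)) / (s - t) - ?D) \<longlongrightarrow> 0) ?F"
  proof (rule tendsto_zero_if_eventually_le_linear[where A="4 * kernel_mass * K * Mq"
        and B="2 * kernel_mass * Cw"])
    fix \<delta> \<epsilon> :: real assume \<delta>: "0 < \<delta>" "\<delta> \<le> 1" and \<epsilon>: "0 < \<epsilon>"
    show "eventually (\<lambda>s. \<bar>(Pot (u s) - Pot (u t)) / (s - t) - ?D\<bar>
        \<le> 4 * kernel_mass * K * Mq * \<delta> + 2 * kernel_mass * Cw * \<epsilon>) ?F"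
      using diff[unfolded X_vanishing_def, rule_format, OF \<delta>(1)]
        remainder[unfolded X_vanishing_def, rule_format, OF \<epsilon>]
        Mq(2)[unfolded X_bounded_def] eventually_at_within_nonneg[of t]
    proof eventually_elim
      case (elim s)
      have "\<bar>(Pot (u s) - Pot (u t)) / (s - t) - ?D\<bar>
        \<le> 2 * kernel_mass * (2 * K * \<delta> * (LINT x|lborel. \<bar>(u s x - u t x) / (s - t)\<bar>)
          + Cw * (LINT x|lborel. \<bar>(u s x - u t x) / (s - t) - u1 t x\<bar>))"
        by (rule Pot_quotient_estimate[where M=M and R=R and K=K and Cw=Cw])
          (use elim t u(1,2) \<delta> M K Cw in \<open>auto simp: R_def inLIL_integrable\<close>)
      also have "\<dots> \<le> 2 * kernel_mass * (2 * K * \<delta> * Mq + Cw * \<epsilon>)"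
        using elim K(1) \<delta> Cw(1) kernel_mass_nonneg by (intro mult_left_mono add_mono) auto
      finally show ?case by (simp add: algebra_simps)
    qed
  qed (use kernel_mass_nonneg K Mq Cw in simp_all)
  then have "((\<lambda>s. ((Pot (u s) - Pot (u t)) / (s - t) - ?D) + ?D) \<longlongrightarrow> 0 + ?D) ?F"
    by (intro tendsto_intros)
  then show ?thesis by (simp add: has_field_derivative_iff)
qed

definition interaction :: "(real \<Rightarrow> real) \<Rightarrow> (real \<Rightarrow> real) \<Rightarrow> real" where
  "interaction f g = integral\<^sup>L lborel2 (\<lambda>p. g (fst p) * (\<beta> (snd p - fst p) * w (f (snd p) - f (fst p))))"

lemma integrable_interaction:
  assumes f: "inLIL f" and g: "integrable lborel g"
  shows "integrable lborel2 (\<lambda>p. g (fst p) * (\<beta> (snd p - fst p) * w (f (snd p) - f (fst p))))"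
    "integrable lborel2 (\<lambda>p. g (snd p) * (\<beta> (snd p - fst p) * w (f (snd p) - f (fst p))))"
proof -
  have [measurable]: "f \<in> borel_measurable borel" "g \<in> borel_measurable borel"
    using inLIL_borel[OF f] borel_measurable_integrable[OF g] by simp_all
  obtain M where M: "M \<ge> 0" "AE x in lborel. \<bar>f x\<bar> \<le> M" using inLIL_AE_bound[OF f] .
  obtain C where C: "C \<ge> 0" "\<And>x. \<bar>x\<bar> \<le> 2 * M \<Longrightarrow> \<bar>w x\<bar> \<le> C"
    using w_bounded[where R="2 * M"] by blast
  have w_le: "AE p in lborel2. \<bar>w (f (snd p) - f (fst p))\<bar> \<le> C"
    using AE_lborel2_fst_snd[OF M(2)] by eventually_elim (intro C(2), auto)
  have dominated: "integrable lborel2 (\<lambda>p. h p * (\<beta> (snd p - fst p) * w (f (snd p) - f (fst p))))"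
    if h_le: "\<And>p. \<bar>h p\<bar> \<le> \<bar>g (snd p)\<bar> + \<bar>g (fst p)\<bar>" and [measurable]: "h \<in> borel_measurable lborel2"
    for h
  proof (rule kernel_dominated(1))
    show "integrable lborel (\<lambda>x. C * \<bar>g x\<bar>)" using g by simp
    show "AE p in lborel2. \<bar>h p * (\<beta> (snd p - fst p) * w (f (snd p) - f (fst p)))\<bar>
        \<le> \<beta> (snd p - fst p) * (C * \<bar>g (snd p)\<bar> + C * \<bar>g (fst p)\<bar>)"
      using w_le
    proof eventually_elim
      case (elim p)
      have "\<bar>h p\<bar> * \<bar>w (f (snd p) - f (fst p))\<bar> \<le> (\<bar>g (snd p)\<bar> + \<bar>g (fst p)\<bar>) * C"
        by (rule mult_mono[OF h_le elim]) (use C(1) in auto)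
      from mult_left_mono[OF this kernel_nonneg[of "snd p - fst p"]]
      show ?case by (simp add: abs_mult kernel_nonneg algebra_simps)
    qed
  qed measurable
  show "integrable lborel2 (\<lambda>p. g (fst p) * (\<beta> (snd p - fst p) * w (f (snd p) - f (fst p))))"
    "integrable lborel2 (\<lambda>p. g (snd p) * (\<beta> (snd p - fst p) * w (f (snd p) - f (fst p))))"
    by (rule dominated; simp)+
qed

lemma integral_interaction_swap:
  assumes f: "inLIL f" and g: "integrable lborel g"
  shows "integral\<^sup>L lborel2 (\<lambda>p. g (snd p) * (\<beta> (snd p - fst p) * w (f (snd p) - f (fst p))))
    = - interaction f g"
proof -
  have [measurable]: "f \<in> borel_measurable borel" "g \<in> borel_measurable borel"
    using inLIL_borel[OF f] borel_measurable_integrable[OF g] by simp_all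
  have "integral\<^sup>L lborel2 (\<lambda>p. g (snd p) * (\<beta> (snd p - fst p) * w (f (snd p) - f (fst p))))
      = integral\<^sup>L lborel2 (\<lambda>p. g (fst p) * (\<beta> (fst p - snd p) * w (f (fst p) - f (snd p))))"
    by (subst lborel2_integral_swap) auto
  also have "\<dots> = integral\<^sup>L lborel2 (\<lambda>p. - (g (fst p) * (\<beta> (snd p - fst p) * w (f (snd p) - f (fst p)))))"
  proof (rule Bochner_Integration.integral_cong[OF refl])
    fix p
    have "w (f (fst p) - f (snd p)) = - w (f (snd p) - f (fst p))"
      using w_odd[of "f (snd p) - f (fst p)"] by simp
    then show "g (fst p) * (\<beta> (fst p - snd p) * w (f (fst p) - f (snd p)))
      = - (g (fst p) * (\<beta> (snd p - fst p) * w (f (snd p) - f (fst p))))" by (simp add: kernel_swap)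
  qed
  finally show ?thesis by (simp add: interaction_def)
qed

lemma integral_pot_deriv_density:
  assumes f: "inLIL f" and v: "integrable lborel v"
  shows "integral\<^sup>L lborel2 (pot_deriv_density f v) = - 2 * interaction f v"
proof -
  have "integral\<^sup>L lborel2 (pot_deriv_density f v)
      = integral\<^sup>L lborel2 (\<lambda>p. v (snd p) * (\<beta> (snd p - fst p) * w (f (snd p) - f (fst p)))
        - v (fst p) * (\<beta> (snd p - fst p) * w (f (snd p) - f (fst p))))"
    by (rule Bochner_Integration.integral_cong[OF refl]) (simp add: pot_deriv_density_def algebra_simps)
  also have "\<dots> = - 2 * interaction f v"
    using integrable_interaction[OF f v] integral_interaction_swap[OF f v] by (simp add: interaction_def)
  finally show ?thesis .
qed

lemma interaction_eq_iterated:
  assumes "inLIL f" "integrable lborel g"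
  shows "interaction f g = (LINT x|lborel. g x * (LINT y|lborel. \<beta> (y - x) * w (f y - f x)))"
  unfolding interaction_def using lborel_pair.integral_fst'[OF integrable_interaction(1)[OF assms]]
  by simp

lemma interaction_self_ge:
  assumes f: "inLIL f" and growth: "\<And>\<eta>. \<eta> * w \<eta> \<le> c * Wpot w \<eta>"
  shows "interaction f f \<ge> - (c / 2) * Pot f"
proof -
  let ?D = "\<lambda>p. \<beta> (snd p - fst p) * ((f (snd p) - f (fst p)) * w (f (snd p) - f (fst p)))"
  have f_int: "integrable lborel f" using inLIL_integrable[OF f] .
  have split: "?D p = f (snd p) * (\<beta> (snd p - fst p) * w (f (snd p) - f (fst p)))
      - f (fst p) * (\<beta> (snd p - fst p) * w (f (snd p) - f (fst p)))" for p
    by (simp add: algebra_simps)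
  have int_D: "integrable lborel2 ?D"
    unfolding split using integrable_interaction[OF f f_int] by simp
  have twice: "2 * interaction f f = - integral\<^sup>L lborel2 ?D"
    unfolding split using integrable_interaction[OF f f_int] integral_interaction_swap[OF f f_int]
    by (simp add: interaction_def)
  have "integral\<^sup>L lborel2 ?D \<le> integral\<^sup>L lborel2 (\<lambda>p. c * pot_density f p)"
  proof (rule integral_mono[OF int_D])
    show "integrable lborel2 (\<lambda>p. c * pot_density f p)" using integrable_pot_density[OF f] by simp
    show "?D p \<le> c * pot_density f p" for p
      using mult_left_mono[OF growth[of "f (snd p) - f (fst p)"] kernel_nonneg[of "snd p - fst p"]]
      by (simp add: pot_density_def ac_simps)
  qed
  also have "\<dots> = c * Pot f"
    using Pot_eq_integral_pot_density[OF f] by simp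
  finally have "2 * interaction f f \<ge> - (c * Pot f)" using twice by linarith
  then show ?thesis by (simp add: field_simps)
qed


lemma energy0_eq_Pot:
  assumes "AE z in lborel. \<alpha> z = \<beta> z" and [measurable]: "\<alpha> \<in> borel_measurable borel"
    and [measurable]: "f \<in> borel_measurable borel" "\<phi> \<in> borel_measurable borel"
      "g \<in> borel_measurable borel" "\<psi> \<in> borel_measurable borel"
    and f_\<phi>: "AE x in lborel. f x = \<phi> x" and g_\<psi>: "AE x in lborel. g x = \<psi> x"
  shows "energy0 \<alpha> w \<phi> \<psi> = ((LINT x|lborel. g x * g x) + Pot f) / 2"
proof -
  have kinetic: "(LINT x|lborel. (\<psi> x)\<^sup>2) = (LINT x|lborel. g x * g x)"
    by (rule integral_cong_AE) (use g_\<psi> in \<open>auto simp: power2_eq_square\<close>)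
  have inner: "(LINT y|lborel. \<alpha> (y - x) * Wpot w (\<phi> y - \<phi> x))
      = (LINT y|lborel. \<beta> (y - x) * Wpot w (f y - f x))" if "f x = \<phi> x" for x
  proof (rule integral_cong_AE)
    have "AE y in lborel. \<alpha> (y - x) = \<beta> (y - x)"
      by (rule AE_lborel_translate[OF _ assms(1)]) measurable
    then show "AE y in lborel. \<alpha> (y - x) * Wpot w (\<phi> y - \<phi> x) = \<beta> (y - x) * Wpot w (f y - f x)"
      using f_\<phi> by eventually_elim (simp add: that)
  qed simp_all
  have "(LINT x|lborel. LINT y|lborel. \<alpha> (y - x) * Wpot w (\<phi> y - \<phi> x)) = Pot f"
    unfolding Pot_def
  proof (rule integral_cong_AE)
    show "(\<lambda>x. LINT y|lborel. \<alpha> (y - x) * Wpot w (\<phi> y - \<phi> x)) \<in> borel_measurable lborel"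
      by (rule borel_measurable_LINT_snd[of "\<lambda>x y. \<alpha> (y - x) * Wpot w (\<phi> y - \<phi> x)"]) measurable
    show "(\<lambda>x. LINT y|lborel. \<beta> (y - x) * Wpot w (f y - f x)) \<in> borel_measurable lborel"
      by (rule borel_measurable_LINT_snd[of "\<lambda>x y. \<beta> (y - x) * Wpot w (f y - f x)"]) measurable
    show "AE x in lborel. (LINT y|lborel. \<alpha> (y - x) * Wpot w (\<phi> y - \<phi> x))
        = (LINT y|lborel. \<beta> (y - x) * Wpot w (f y - f x))"
      using f_\<phi> by eventually_elim (rule inner)
  qed
  then show ?thesis using kinetic by (simp add: energy0_def)
qed

end

text \<open>The hypotheses on \<open>\<alpha>\<close> hold only almost everywhere; all integrals involving \<open>\<alpha>\<close> are
  unchanged when it is replaced by a representative that is even and nonnegative everywhere.\<close>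

lemma even_nonneg_representative:
  fixes \<alpha> :: "real \<Rightarrow> real"
  assumes \<alpha>: "integrable lborel \<alpha>" and even: "AE x in lborel. \<alpha> (- x) = \<alpha> x"
    and nonneg: "AE x in lborel. \<alpha> x \<ge> 0"
  obtains \<beta> where "sym_kernel \<beta>" "AE z in lborel. \<alpha> z = \<beta> z"
proof
  have [measurable]: "\<alpha> \<in> borel_measurable borel" using borel_measurable_integrable[OF \<alpha>] by simp
  define \<beta> where "\<beta> = (\<lambda>z. max 0 ((\<alpha> z + \<alpha> (- z)) / 2))"
  have "integrable lborel (\<lambda>z. \<alpha> (- z))"
    using lborel_integrable_real_affine[OF \<alpha>, of "-1" 0] by simp
  have "integrable lborel \<beta>"
  proof (rule Bochner_Integration.integrable_bound)
    show "integrable lborel (\<lambda>z. (\<bar>\<alpha> z\<bar> + \<bar>\<alpha> (- z)\<bar>) / 2)"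
      using \<alpha> \<open>integrable lborel (\<lambda>z. \<alpha> (- z))\<close> by simp
    show "AE x in lborel. norm (\<beta> x) \<le> norm ((\<bar>\<alpha> x\<bar> + \<bar>\<alpha> (- x)\<bar>) / 2)"
      by (rule AE_I2) (auto simp: \<beta>_def max_def abs_if)
  qed (simp add: \<beta>_def)
  then show "sym_kernel \<beta>"
    by unfold_locales (auto simp: \<beta>_def add.commute)
  show "AE z in lborel. \<alpha> z = \<beta> z"
    using even nonneg by eventually_elim (auto simp: \<beta>_def)
qed

lemma integral_kernel_cong_AE:
  fixes \<alpha> \<beta> h :: "real \<Rightarrow> real"
  assumes "AE z in lborel. \<alpha> z = \<beta> z"
    and [measurable]: "\<alpha> \<in> borel_measurable borel" "\<beta> \<in> borel_measurable borel" "h \<in> borel_measurable borel"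
  shows "(LINT y|lborel. \<alpha> (y - x) * h y) = (LINT y|lborel. \<beta> (y - x) * h y)"
proof (rule integral_cong_AE)
  have "AE y in lborel. \<alpha> (y - x) = \<beta> (y - x)"
    by (rule AE_lborel_translate[OF _ assms(1)]) measurable
  then show "AE y in lborel. \<alpha> (y - x) * h y = \<beta> (y - x) * h y" by eventually_elim simp
qed simp_all


section \<open>Energy conservation and blow-up\<close>

locale kernel_solution = potential \<beta> w w' for \<beta> w w' +
  fixes u u1 u2 :: "real \<Rightarrow> real \<Rightarrow> real"
  assumes u_inLIL: "\<And>t. t \<ge> 0 \<Longrightarrow> inLIL (u t)"
    and u1_inLIL: "\<And>t. t \<ge> 0 \<Longrightarrow> inLIL (u1 t)"
    and u2_inLIL: "\<And>t. t \<ge> 0 \<Longrightarrow> inLIL (u2 t)"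
    and u_deriv: "X_has_deriv u u1" and u1_deriv: "X_has_deriv u1 u2"
    and equation: "\<And>t. t \<ge> 0 \<Longrightarrow> AE x in lborel. u2 t x = (LINT y|lborel. \<beta> (y - x) * w (u t y - u t x))"
begin

lemma integral_mult_u2:
  assumes t: "t \<ge> 0" and g: "inLIL g"
  shows "(LINT x|lborel. g x * u2 t x) = interaction (u t) g"
proof -
  have [measurable]: "u t \<in> borel_measurable borel" "u2 t \<in> borel_measurable borel"
    "g \<in> borel_measurable borel"
    using u_inLIL[OF t] u2_inLIL[OF t] g by (simp_all add: inLIL_borel)
  have "(LINT x|lborel. g x * u2 t x) = (LINT x|lborel. g x * (LINT y|lborel. \<beta> (y - x) * w (u t y - u t x)))"
    by (rule integral_cong_AE) (use equation[OF t] in auto)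
  then show ?thesis using interaction_eq_iterated[OF u_inLIL[OF t] inLIL_integrable[OF g]] by simp
qed

definition kinetic :: "real \<Rightarrow> real" where
  "kinetic t = (LINT x|lborel. u1 t x * u1 t x)"

definition energy :: "real \<Rightarrow> real" where
  "energy t = (kinetic t + Pot (u t)) / 2"

lemma energy_has_derivative: "t \<ge> 0 \<Longrightarrow> (energy has_real_derivative 0) (at t within {0..})"
proof -
  assume t: "t \<ge> 0"
  let ?I = "interaction (u t) (u1 t)"
  have "(kinetic has_real_derivative (LINT x|lborel. u2 t x * u1 t x + u1 t x * u2 t x)) (at t within {0..})"
    unfolding kinetic_def by (rule X_has_deriv_integral_mult[OF u1_inLIL u2_inLIL u1_deriv u1_inLIL u2_inLIL u1_deriv t])
  moreover have "(LINT x|lborel. u2 t x * u1 t x + u1 t x * u2 t x) = 2 * ?I"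
    using integral_mult_u2[OF t u1_inLIL[OF t]]
      integrable_mult_inLIL[OF inLIL_integrable[OF u2_inLIL[OF t]] u1_inLIL[OF t]]
      integrable_mult_inLIL[OF inLIL_integrable[OF u1_inLIL[OF t]] u2_inLIL[OF t]]
    by (simp add: mult.commute)
  moreover have "((\<lambda>s. Pot (u s)) has_real_derivative - 2 * ?I) (at t within {0..})"
    using Pot_has_derivative[OF u_inLIL u1_inLIL u_deriv t]
      integral_pot_deriv_density[OF u_inLIL[OF t] inLIL_integrable[OF u1_inLIL[OF t]]] by simp
  ultimately have "(energy has_real_derivative (2 * ?I + - 2 * ?I) / 2) (at t within {0..})"
    unfolding energy_def by (intro DERIV_cdivide DERIV_add) simp_all
  then show ?thesis by simp
qed

lemma energy_conserved:
  assumes "t \<ge> 0"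
  shows "energy t = energy 0"
proof -
  have "energy t - energy 0 = 0"
    using mean_value_within[OF assms, of "{0..}" energy "\<lambda>_. 0"] energy_has_derivative by force
  then show ?thesis by simp
qed

lemma integral_u_u2_ge:
  assumes growth: "\<And>\<eta>. \<eta> * w \<eta> \<le> c * Wpot w \<eta>" and t: "t \<ge> 0"
  shows "(LINT x|lborel. u t x * u2 t x) \<ge> - (c / 2) * (2 * energy 0 - kinetic t)"
proof -
  have "Pot (u t) = 2 * energy 0 - kinetic t"
    using energy_conserved[OF t] by (simp add: energy_def field_simps)
  then have "- (c / 2) * (2 * energy 0 - kinetic t) \<le> interaction (u t) (u t)"
    using interaction_self_ge[OF u_inLIL[OF t] growth] by simp
  then show ?thesis using integral_mult_u2[OF t u_inLIL[OF t]] by simp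
qed

text \<open>Here \<open>F = \<parallel>u\<parallel>\<^sub>2\<^sup>2\<close>, \<open>G = F'/2\<close> and \<open>H = G'\<close>; the lower bound on \<open>H\<close> comes from the growth
  condition and conservation of energy, via \<open>integral_u_u2_ge\<close>.\<close>

lemma energy_nonneg:
  assumes \<nu>: "\<nu> > 0" and growth: "\<And>\<eta>. \<eta> * w \<eta> \<le> 2 * (1 + 2 * \<nu>) * Wpot w \<eta>"
  shows "energy 0 \<ge> 0"
proof (rule ccontr)
  assume negative: "\<not> energy 0 \<ge> 0"
  define F where "F = (\<lambda>t. LINT x|lborel. u t x * u t x)"
  define G where "G = (\<lambda>t. LINT x|lborel. u t x * u1 t x)"
  define H where "H = (\<lambda>t. kinetic t + (LINT x|lborel. u t x * u2 t x))"
  show False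
  proof (rule concavity_blowup[where F=F and G=G and H=H and N=kinetic and \<nu>=\<nu>
        and c="- 2 * (1 + 2 * \<nu>) * energy 0"])
    fix t :: real assume t: "t \<ge> 0"
    note L = u_inLIL[OF t] u1_inLIL[OF t] u2_inLIL[OF t]
    have "(F has_real_derivative (LINT x|lborel. u1 t x * u t x + u t x * u1 t x)) (at t within {0..})"
      unfolding F_def by (rule X_has_deriv_integral_mult[OF u_inLIL u1_inLIL u_deriv u_inLIL u1_inLIL u_deriv t])
    then show "(F has_real_derivative 2 * G t) (at t within {0..})"
      using integrable_mult_inLIL[OF inLIL_integrable[OF L(2)] L(1)]
        integrable_mult_inLIL[OF inLIL_integrable[OF L(1)] L(2)]
      by (simp add: G_def mult.commute)
    have "(G has_real_derivative (LINT x|lborel. u1 t x * u1 t x + u t x * u2 t x)) (at t within {0..})"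
      unfolding G_def by (rule X_has_deriv_integral_mult[OF u_inLIL u1_inLIL u_deriv u1_inLIL u2_inLIL u1_deriv t])
    then show "(G has_real_derivative H t) (at t within {0..})"
      using integrable_mult_inLIL[OF inLIL_integrable[OF L(2)] L(2)]
        integrable_mult_inLIL[OF inLIL_integrable[OF L(1)] L(3)]
      by (simp add: H_def kinetic_def)
    show "F t \<ge> 0" unfolding F_def by (rule integral_nonneg_AE) simp
    show "kinetic t \<ge> 0" unfolding kinetic_def by (rule integral_nonneg_AE) simp
    show "(G t)^2 \<le> F t * kinetic t"
      unfolding G_def F_def kinetic_def by (rule inLIL_Cauchy_Schwarz[OF L(1,2)])
    show "H t \<ge> (2 + 2 * \<nu>) * kinetic t + - 2 * (1 + 2 * \<nu>) * energy 0"
      using integral_u_u2_ge[OF growth t] by (simp add: H_def field_simps)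
  next
    show "- 2 * (1 + 2 * \<nu>) * energy 0 > 0" using negative \<nu> by (simp add: mult_neg_neg)
  qed (rule \<nu>)
qed

lemma energy0_eq_energy:
  assumes sol: "global_solution \<alpha> w \<phi> \<psi> u u1 u2" and \<alpha>_\<beta>: "AE z in lborel. \<alpha> z = \<beta> z"
    and "\<alpha> \<in> borel_measurable borel" "inLIL \<phi>" "inLIL \<psi>"
  shows "energy0 \<alpha> w \<phi> \<psi> = energy 0"
  unfolding energy_def kinetic_def
  by (rule energy0_eq_Pot[OF \<alpha>_\<beta> assms(3)])
    (use sol assms(4,5) u_inLIL u1_inLIL in \<open>auto simp: global_solution_def inLIL_borel\<close>)

end

lemma (in potential) kernel_solution_if_global_solution:
  assumes sol: "global_solution \<alpha> w \<phi> \<psi> u u1 u2" and \<alpha>_\<beta>: "AE z in lborel. \<alpha> z = \<beta> z"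
    and [measurable]: "\<alpha> \<in> borel_measurable borel"
  shows "kernel_solution \<beta> w w' u u1 u2"
proof unfold_locales
  fix t :: real assume t: "t \<ge> 0"
  have [measurable]: "u t \<in> borel_measurable borel"
    using sol t by (simp add: global_solution_def inLIL_borel)
  have "AE x in lborel. u2 t x = (LINT y|lborel. \<alpha> (y - x) * w (u t y - u t x))"
    using sol t by (simp add: global_solution_def)
  then show "AE x in lborel. u2 t x = (LINT y|lborel. \<beta> (y - x) * w (u t y - u t x))"
  proof eventually_elim
    case (elim x)
    have "(LINT y|lborel. \<alpha> (y - x) * w (u t y - u t x)) = (LINT y|lborel. \<beta> (y - x) * w (u t y - u t x))"
      by (rule integral_kernel_cong_AE[OF \<alpha>_\<beta>]) measurable
    then show ?case using elim by simp
  qed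
qed (use sol in \<open>auto simp: global_solution_def\<close>)

theorem theorem4p4:
  fixes \<alpha> w \<phi> \<psi> :: "real \<Rightarrow> real" and \<nu> :: real
  assumes alpha_L1: "integrable lborel \<alpha>"
    and alpha_even: "AE x in lborel. \<alpha> (- x) = \<alpha> x"
    and alpha_nonneg: "AE x in lborel. \<alpha> x \<ge> 0"
    and w_C1: "\<exists>w'. continuous_on UNIV w' \<and> (\<forall>x. (w has_real_derivative w' x) (at x))"
    and w_odd: "\<forall>x. w (- x) = - w x"
    and w_0: "w 0 = 0"
    and phi: "inLIL \<phi>" and psi: "inLIL \<psi>"
    and nu: "\<nu> > 0"
    and growth: "\<forall>\<eta>. \<eta> * w \<eta> \<le> 2 * (1 + 2 * \<nu>) * Wpot w \<eta>"
    and neg_energy: "energy0 \<alpha> w \<phi> \<psi> < 0"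
  shows "\<not> (\<exists>u u1 u2. global_solution \<alpha> w \<phi> \<psi> u u1 u2)"
proof
  assume "\<exists>u u1 u2. global_solution \<alpha> w \<phi> \<psi> u u1 u2"
  then obtain u u1 u2 where sol: "global_solution \<alpha> w \<phi> \<psi> u u1 u2" by blast
  obtain w' where w': "continuous_on UNIV w'" "\<And>x. (w has_real_derivative w' x) (at x)"
    using w_C1 by blast
  obtain \<beta> where \<beta>: "sym_kernel \<beta>" and \<alpha>_\<beta>: "AE z in lborel. \<alpha> z = \<beta> z"
    using even_nonneg_representative[OF alpha_L1 alpha_even alpha_nonneg] by blast
  have \<alpha>_borel: "\<alpha> \<in> borel_measurable borel"
    using borel_measurable_integrable[OF alpha_L1] by simp
  interpret sym_kernel \<beta> by (rule \<beta>)
  interpret potential \<beta> w w' by unfold_locales (use w' w_odd in auto)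
  interpret kernel_solution \<beta> w w' u u1 u2
    by (rule kernel_solution_if_global_solution[OF sol \<alpha>_\<beta> \<alpha>_borel])
  have "energy0 \<alpha> w \<phi> \<psi> = energy 0"
    by (rule energy0_eq_energy[OF sol \<alpha>_\<beta> \<alpha>_borel phi psi])
  then show False using energy_nonneg[OF nu] growth neg_energy by simp
qed

end
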